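(* There exists an infinite strictly increasing sequence of square-primes $A_1<A_2<A_3<\cdots$ such that the P-G triangle generated by $\mathfrak u=(A_1,A_2,A_3,\dots)$ has left edge $(b_0,b_1,b_2,\dots)$ satisfying $b_j=1$ for every odd index $j\ge 1$ (that is, every other element of the left edge, starting with the second one, equals $1$).
   Context: A square-prime (SP-number) is a positive integer of the form $k^2p$ with $k\ge 2$ an integer and $p$ a prime. For a finite or infinite sequence $\mathfrak u=(a_0,a_1,\dots)$ of non-negative integers, the P-G triangle generated by $\mathfrak u$ consists of the numbers $d_k^{(j)}$ defined by $d_k^{(0)}=a_k$ and $d_k^{(j+1)}=|d_{k+1}^{(j)}-d_k^{(j)}|$ for $j,k\ge 0$ (for a finite sequence $(a_0,\dots,a_{N-1})$ these are defined for $0\le k\le N-1-j$). Its left (western) edge is the sequence $b_j=d_0^{(j)}$, $j\ge 0$ (so $b_0=a_0$). *)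

theory Defs
  imports "HOL-Computational_Algebra.Primes"
begin

definition sq_prime :: "nat \<Rightarrow> bool" where
  "sq_prime n \<longleftrightarrow> (\<exists>k p::nat. k \<ge> 2 \<and> prime p \<and> n = k\<^sup>2 * p)"

primrec pg :: "(nat \<Rightarrow> nat) \<Rightarrow> nat \<Rightarrow> nat \<Rightarrow> nat" where
  "pg a 0 k = a k"
| "pg a (Suc j) k = (if pg a j (Suc k) \<ge> pg a j k then pg a j (Suc k) - pg a j k
                       else pg a j k - pg a j (Suc k))"

definition left_edge :: "(nat \<Rightarrow> nat) \<Rightarrow> nat \<Rightarrow> nat" where
  "left_edge a j = pg a j 0"

end

theory Submission
  imports Defs
begin

text \<open>
  Take \<open>A\<^sub>0 = 27, A\<^sub>1 = 28\<close> and then pairs \<open>x, x + 2\<close> with \<open>x = 3k\<^sup>2\<close>, \<open>x + 2 = 2l\<^sup>2\<close>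
  (the Pell-type equation \<open>2l\<^sup>2 - 3k\<^sup>2 = 2\<close> has infinitely many solutions), each
  pair much larger than everything before it. Appending such a pair at positions \<open>s + 1\<close>,
  \<open>s + 2\<close> (\<open>s\<close> odd) makes the new antidiagonal through position \<open>s + 1\<close> stay huge, so the
  antidiagonal through \<open>s + 2\<close> satisfies \<open>T\<^sub>j\<^sub>+\<^sub>2 = |P\<^sub>j - T\<^sub>j|\<close> in terms of the old
  antidiagonal \<open>P\<close> through \<open>s\<close>. Starting from \<open>T\<^sub>1 = 2\<close>, the odd entries of the
  antidiagonals therefore read \<open>2, 0, \<dots>, 0, 1\<close>, and the last of them is on the left edge.
\<close>

lemma pg_le_mono:
  assumes "mono a"
  shows "pg a j k \<le> a (k + j)"
proof (induction j arbitrary: k)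
  case 0
  then show ?case by simp
next
  case (Suc j)
  have "pg a j (Suc k) \<le> a (k + Suc j)" using Suc[of "Suc k"] by simp
  moreover have "pg a j k \<le> a (k + Suc j)"
    using Suc[of k] monoD[OF assms, of "k + j" "k + Suc j"] by simp
  ultimately show ?case by auto
qed

lemma pg_antidiagonal_lower_bound:
  assumes "mono a" and big: "Suc s * a s + 2 \<le> a (Suc s)" and "j \<le> Suc s"
  shows "(Suc s - j) * a s + 2 \<le> pg a j (Suc s - j)"
  using \<open>j \<le> Suc s\<close>
proof (induction j)
  case 0
  then show ?case using big by simp
next
  case (Suc j)
  then have "j \<le> s" by simp
  have "pg a j (s - j) \<le> a s" using pg_le_mono[OF \<open>mono a\<close>, of j "s - j"] \<open>j \<le> s\<close> by simp
  moreover have "Suc (s - j) * a s + 2 \<le> pg a j (Suc (s - j))"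
    using Suc \<open>j \<le> s\<close> by (simp add: Suc_diff_le)
  ultimately show ?case by auto
qed

lemma pg_antidiagonal_step:
  assumes "mono a" and "Suc s * a s + 2 \<le> a (Suc s)" and "j \<le> s"
  shows "pg a (Suc j) (s - j) = pg a j (Suc s - j) - pg a j (s - j)"
proof -
  have "pg a j (s - j) \<le> a s" using pg_le_mono[OF assms(1), of j "s - j"] assms(3) by simp
  also have "\<dots> \<le> pg a j (Suc s - j)"
    using pg_antidiagonal_lower_bound[OF assms(1,2), of j] assms(3) by (simp add: Suc_diff_le)
  finally show ?thesis using assms(3) by (simp add: Suc_diff_le)
qed

text \<open>
  With \<open>P\<^sub>j, D\<^sub>j, T\<^sub>j\<close> the entries of row \<open>j\<close> on the antidiagonals through positions
  \<open>s, s + 1, s + 2\<close>: \<open>D\<^sub>j\<^sub>+\<^sub>1 = D\<^sub>j - P\<^sub>j\<close> and \<open>T\<^sub>j\<^sub>+\<^sub>1 = D\<^sub>j - T\<^sub>j\<close>, so the huge \<open>D\<^sub>j\<close>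
  cancels in \<open>T\<^sub>j\<^sub>+\<^sub>2 = |T\<^sub>j\<^sub>+\<^sub>1 - D\<^sub>j\<^sub>+\<^sub>1|\<close>.
\<close>
lemma pg_antidiagonal_two_steps:
  assumes "mono a" and "Suc s * a s + 2 \<le> a (Suc s)" and "j \<le> s"
    and small: "pg a j (Suc (Suc s) - j) \<le> 2"
  defines "P \<equiv> pg a j (s - j)" and "T \<equiv> pg a j (Suc (Suc s) - j)"
  shows "pg a (Suc (Suc j)) (s - j) = (if T \<le> P then P - T else T - P)"
proof -
  define D where "D = pg a j (Suc s - j)"
  have "(Suc s - j) * a s + 2 \<le> D"
    using pg_antidiagonal_lower_bound[OF assms(1,2), of j] assms(3) by (simp add: D_def)
  moreover have "P \<le> a s" using pg_le_mono[OF assms(1), of j "s - j"] assms(3) by (simp add: P_def)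
  moreover have "a s \<le> (Suc s - j) * a s" using assms(3) by (simp add: Suc_diff_le)
  ultimately have "T + P \<le> D" using small unfolding T_def by linarith
  have D_next: "pg a (Suc j) (s - j) = D - P"
    using pg_antidiagonal_step[OF assms(1-3)] by (simp add: D_def P_def)
  have T_next: "pg a (Suc j) (Suc (s - j)) = D - T"
    using \<open>T + P \<le> D\<close> assms(3) by (simp add: D_def T_def Suc_diff_le)
  show ?thesis
    unfolding pg.simps(2)[of a "Suc j"] D_next T_next using \<open>T + P \<le> D\<close> by auto
qed

lemma pg_odd_antidiagonal:
  assumes "mono a" and base: "pg a 1 0 = 1"
    and pair: "\<And>m. a (2*m + 3) = a (2*m + 2) + 2"
    and big: "\<And>m. (2*m + 2) * a (2*m + 1) + 2 \<le> a (2*m + 2)"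
    and "i \<le> N"
  shows "pg a (2*i + 1) (2*N - 2*i) = (if i = N then 1 else if i = 0 then 2 else 0)"
  using \<open>i \<le> N\<close>
proof (induction N arbitrary: i)
  case 0
  then show ?case using base by simp
next
  case (Suc N)
  note previous_antidiagonal = Suc.IH
  let ?s = "2*N + 1"
  have big_s: "Suc ?s * a ?s + 2 \<le> a (Suc ?s)" using big[of N] by simp
  show ?case using \<open>i \<le> Suc N\<close>
  proof (induction i)
    case 0
    have "pg a 1 (2*N + 2) = 2" using pair[of N] by (simp add: numeral_eq_Suc)
    then show ?case by simp
  next
    case (Suc i)
    have "i \<le> N" using Suc.prems by simp
    have idx: "Suc (Suc ?s) - (2*i + 1) = 2 * Suc N - 2*i" "?s - (2*i + 1) = 2*N - 2*i"
      using \<open>i \<le> N\<close> by simp_all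
    define t where "t = (if i = 0 then 2 else 0 :: nat)"
    define p where "p = (if i = N then 1 else if i = 0 then 2 else 0 :: nat)"
    have T: "pg a (2*i + 1) (Suc (Suc ?s) - (2*i + 1)) = t"
      and P: "pg a (2*i + 1) (?s - (2*i + 1)) = p"
      using Suc.IH[OF Suc_leD[OF Suc.prems]] previous_antidiagonal[OF \<open>i \<le> N\<close>] \<open>i \<le> N\<close> idx
      by (simp_all add: t_def p_def del: pg.simps)
    have "pg a (Suc (Suc (2*i + 1))) (?s - (2*i + 1)) = (if t \<le> p then p - t else t - p)"
      by (rule pg_antidiagonal_two_steps[OF \<open>mono a\<close> big_s, of "2*i + 1", unfolded T P])
        (use \<open>i \<le> N\<close> in \<open>simp_all add: t_def\<close>)
    moreover have "(if t \<le> p then p - t else t - p) = (if Suc i = Suc N then 1 else 0)"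
      by (auto simp: t_def p_def)
    moreover have "Suc (Suc (2*i + 1)) = 2 * Suc i + 1" and "?s - (2*i + 1) = 2 * Suc N - 2 * Suc i"
      by simp_all
    ultimately show ?case by (simp del: pg.simps)
  qed
qed

lemma left_edge_odd_eq_1:
  assumes "mono a" and "left_edge a 1 = 1"
    and "\<And>m. a (2*m + 3) = a (2*m + 2) + 2"
    and "\<And>m. (2*m + 2) * a (2*m + 1) + 2 \<le> a (2*m + 2)"
    and "odd j"
  shows "left_edge a j = 1"
proof -
  obtain N where "j = 2*N + 1" using \<open>odd j\<close> by (metis oddE)
  then show ?thesis
    using pg_odd_antidiagonal[OF assms(1) _ assms(3,4), of N N] assms(2)
    by (simp add: left_edge_def del: pg.simps)
qed

lemma pell_solution_above: "\<exists>k l :: nat. B \<le> k \<and> 2 \<le> l \<and> 2 * l\<^sup>2 = 3 * k\<^sup>2 + 2"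
proof (induction B)
  case 0
  show ?case by (intro exI[of _ 4] exI[of _ 5]) simp
next
  case (Suc B)
  then obtain k l :: nat where "B \<le> k" "2 \<le> l" "2 * l\<^sup>2 = 3 * k\<^sup>2 + 2" by blast
  then have "2 * (5*l + 6*k)\<^sup>2 = 3 * (4*l + 5*k)\<^sup>2 + 2"
    by (simp add: power2_eq_square algebra_simps)
  with \<open>B \<le> k\<close> \<open>2 \<le> l\<close> show ?case by (intro exI[of _ "4*l + 5*k"] exI[of _ "5*l + 6*k"]) simp
qed

lemma ex_sq_prime_pair_above: "\<exists>x. B \<le> x \<and> sq_prime x \<and> sq_prime (x + 2)"
proof -
  obtain k l :: nat where "B + 2 \<le> k" "2 \<le> l" and pell: "2 * l\<^sup>2 = 3 * k\<^sup>2 + 2"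
    using pell_solution_above by blast
  have "B \<le> k" using \<open>B + 2 \<le> k\<close> by simp
  also have "\<dots> \<le> k\<^sup>2 * 3" by (simp add: power2_eq_square)
  finally have "B \<le> k\<^sup>2 * 3" .
  moreover have "sq_prime (k\<^sup>2 * 3)" using \<open>B + 2 \<le> k\<close> unfolding sq_prime_def
    by (intro exI[of _ k] exI[of _ 3]) simp
  moreover have "sq_prime (k\<^sup>2 * 3 + 2)" using \<open>2 \<le> l\<close> pell unfolding sq_prime_def
    by (intro exI[of _ l] exI[of _ 2]) simp
  ultimately show ?thesis by auto
qed

definition sq_prime_pair_above :: "nat \<Rightarrow> nat" where
  "sq_prime_pair_above B = (SOME x. B \<le> x \<and> sq_prime x \<and> sq_prime (x + 2))"

lemma sq_prime_pair_aboveD: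
  "B \<le> sq_prime_pair_above B" "sq_prime (sq_prime_pair_above B)" "sq_prime (sq_prime_pair_above B + 2)"
  using someI_ex[OF ex_sq_prime_pair_above[of B]] unfolding sq_prime_pair_above_def by blast+

fun sq_prime_seq :: "nat \<Rightarrow> nat" where
  "sq_prime_seq 0 = 27"
| "sq_prime_seq (Suc 0) = 28"
| "sq_prime_seq (Suc (Suc n)) = (if even n
     then sq_prime_pair_above ((n + 2) * sq_prime_seq (Suc n) + 2)
     else sq_prime_seq (Suc n) + 2)"

lemma sq_prime_seq_even:
  "sq_prime_seq (2*m + 2) = sq_prime_pair_above ((2*m + 2) * sq_prime_seq (2*m + 1) + 2)"
  using sq_prime_seq.simps(3)[of "2*m"] by (simp del: sq_prime_seq.simps)

lemma sq_prime_seq_odd: "sq_prime_seq (2*m + 3) = sq_prime_seq (2*m + 2) + 2"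
proof -
  have "sq_prime_seq (2*m + 3) = sq_prime_seq (Suc (Suc (Suc (2*m))))"
    by (rule arg_cong[of _ _ sq_prime_seq]) simp
  also have "\<dots> = sq_prime_seq (Suc (Suc (2*m))) + 2"
    by (simp only: sq_prime_seq.simps(3)[of "Suc (2*m)"]) simp
  finally show ?thesis by (simp del: sq_prime_seq.simps)
qed

lemma strict_mono_sq_prime_seq: "strict_mono sq_prime_seq"
proof (rule strict_mono_Suc_iff[THEN iffD2], intro allI)
  fix n
  show "sq_prime_seq n < sq_prime_seq (Suc n)"
  proof (cases n)
    case (Suc n')
    have "sq_prime_seq (Suc n') < (n' + 2) * sq_prime_seq (Suc n') + 2" by simp
    also have "\<dots> \<le> sq_prime_pair_above ((n' + 2) * sq_prime_seq (Suc n') + 2)"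
      by (rule sq_prime_pair_aboveD(1))
    finally show ?thesis unfolding Suc sq_prime_seq.simps(3) by simp
  qed simp
qed

lemma sq_prime_sq_prime_seq: "sq_prime (sq_prime_seq n)"
proof -
  have "n = 0 \<or> n = 1 \<or> (\<exists>m. n = 2*m + 2) \<or> (\<exists>m. n = 2*m + 3)" by presburger
  then consider "n = 0" | "n = 1" | m where "n = 2*m + 2" | m where "n = 2*m + 3" by blast
  then show ?thesis
  proof cases
    case 1
    have "sq_prime (3\<^sup>2 * 3)" unfolding sq_prime_def by (intro exI[of _ 3] exI[of _ 3]) simp
    then show ?thesis using 1 by simp
  next
    case 2
    have "sq_prime (2\<^sup>2 * 7)" unfolding sq_prime_def by (intro exI[of _ 2] exI[of _ 7]) simp
    then show ?thesis using 2 by simp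
  qed (simp_all only: sq_prime_seq_even sq_prime_seq_odd sq_prime_pair_aboveD)
qed

theorem theorem2p1:
  shows "\<exists>A :: nat \<Rightarrow> nat. strict_mono A \<and> (\<forall>i. sq_prime (A i)) \<and>
           (\<forall>j. odd j \<longrightarrow> left_edge A j = 1)"
proof (intro exI[of _ sq_prime_seq] conjI allI impI)
  show "strict_mono sq_prime_seq" by (rule strict_mono_sq_prime_seq)
  show "sq_prime (sq_prime_seq i)" for i by (rule sq_prime_sq_prime_seq)
  show "left_edge sq_prime_seq j = 1" if "odd j" for j
  proof (rule left_edge_odd_eq_1[OF strict_mono_mono[OF strict_mono_sq_prime_seq] _ sq_prime_seq_odd _ that])
    show "left_edge sq_prime_seq 1 = 1" by (simp add: left_edge_def)
    show "(2*m + 2) * sq_prime_seq (2*m + 1) + 2 \<le> sq_prime_seq (2*m + 2)" for m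
      by (simp only: sq_prime_seq_even sq_prime_pair_aboveD(1))
  qed
qed

end
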